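(* Let $\Omega\subset\mathbb{R}^n$ ($n\ge1$) be a bounded domain, $T>0$, $\delta\in(0,1)\cup(1,2)$, $\bar Q:=\bar\Omega\times[0,T]$ and $Q:=\Omega\times(0,T]$. Let $u$ be a classical solution of the initial-boundary value problem described in the context, and suppose $u\in C^{2,\bar\delta}(\bar Q)$. Suppose moreover that the boundary value problem \[ L_0w(x)=f(x,0)\ \text{ for } x\in\Omega,\qquad w(x)=\psi(x,0)\ \text{ for } x\in\partial\Omega \] has at most one solution $w$, where $L_0w(x):=-\sum_{i,j=1}^n p_{ij}(x,0)\,\partial^2 w/\partial x_i\partial x_j+\sum_{i=1}^n q_i(x,0)\,\partial w/\partial x_i+r(x,0)w$. Then the initial value $\phi_0$ is a solution of this boundary value problem and hence is uniquely determined by $L_0$, $f(\cdot,0)$ and $\psi(\cdot,0)$ (it is the unique solution of that problem).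
   Context: Set $\bar\delta=1$ if $0<\delta<1$ and $\bar\delta=2$ if $1<\delta<2$. The Caputo fractional derivative is \[ D_t^\delta g(x,t):=\frac{1}{\Gamma(\bar\delta-\delta)}\int_0^t (t-s)^{\bar\delta-\delta-1}\,\frac{\partial^{\bar\delta}g(x,s)}{\partial s^{\bar\delta}}\,ds,\qquad x\in\Omega,\ 0<t\le T. \] The problem is: $D_t^\delta u-\sum_{i,j=1}^n p_{ij}(x,t)\,\partial^2u/\partial x_i\partial x_j+\sum_{i=1}^n q_i(x,t)\,\partial u/\partial x_i+r(x,t)u=f(x,t)$ for $(x,t)\in Q$; $u(x,t)=\psi(x,t)$ for $(x,t)\in\partial\Omega\times(0,T]$; $u(x,0)=\phi_0(x)$ for $x\in\bar\Omega$; and, only when $1<\delta<2$, $u_t(x,0)=\phi_1(x)$ for $x\in\Omega$. The spatial operator is uniformly elliptic on $Q$; $p_{ij},q_i,r,\psi,\phi_0,\phi_1$ are continuous on the closures of their domains; $f$ is continuous on $\bar Q$; and $\phi_0(x)=\psi(x,0)$ for all $x\in\partial\Omega$. A classical solution is a function $u$ continuous on $\bar Q$ for which $D_t^\delta u$, $\partial u/\partial x_i$, $\partial^2u/\partial x_i\partial x_j$ exist at every point of $Q$ and the equation and conditions hold pointwise. $C^{2,\bar\delta}(\bar Q)$ denotes the set of $w\in C(\bar Q)$ such that $\partial w/\partial x_i$, $\partial^2w/\partial x_i\partial x_j$ ($1\le i,j\le n$) and $\partial^k w/\partial t^k$ for $k=1,\bar\delta$ all lie in $C(\bar Q)$. 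*)

theory Defs
  imports "HOL-Analysis.Analysis"
begin

text \<open>Conventions.  Space is \<open>real^'n\<close> (dimension n = CARD('n) \<ge> 1).
  Functions of (x,t) are curried: \<open>u x t\<close>.  \<open>axis i 1\<close> is the i-th unit vector.\<close>

definition dbar :: "real \<Rightarrow> nat" where
  "dbar \<delta> = (if \<delta> < 1 then 1 else 2)"

definition pdx :: "'n::finite \<Rightarrow> (real^'n \<Rightarrow> real) \<Rightarrow> real^'n \<Rightarrow> real" where
  "pdx i v x = deriv (\<lambda>h. v (x + h *\<^sub>R axis i 1)) 0"

definition pdx_exists :: "'n::finite \<Rightarrow> (real^'n \<Rightarrow> real) \<Rightarrow> real^'n \<Rightarrow> bool" where
  "pdx_exists i v x \<longleftrightarrow> (\<lambda>h. v (x + h *\<^sub>R axis i 1)) differentiable (at 0)"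

definition dtk :: "nat \<Rightarrow> (real^'n \<Rightarrow> real \<Rightarrow> real) \<Rightarrow> real^'n \<Rightarrow> real \<Rightarrow> real" where
  "dtk k u x t = (deriv ^^ k) (u x) t"

definition caputo :: "real \<Rightarrow> (real^'n \<Rightarrow> real \<Rightarrow> real) \<Rightarrow> real^'n \<Rightarrow> real \<Rightarrow> real" where
  "caputo \<delta> u x t = 1 / Gamma (real (dbar \<delta>) - \<delta>) *
     integral {0..t} (\<lambda>s. (t - s) powr (real (dbar \<delta>) - \<delta> - 1) * dtk (dbar \<delta>) u x s)"

definition caputo_exists :: "real \<Rightarrow> (real^'n \<Rightarrow> real \<Rightarrow> real) \<Rightarrow> real^'n \<Rightarrow> real \<Rightarrow> bool" where
  "caputo_exists \<delta> u x t \<longleftrightarrow>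
     (\<forall>s\<in>{0<..<t}. \<forall>k<dbar \<delta>. (deriv ^^ k) (u x) differentiable (at s)) \<and>
     (\<lambda>s. (t - s) powr (real (dbar \<delta>) - \<delta> - 1) * dtk (dbar \<delta>) u x s) integrable_on {0..t}"

definition Lop :: "('n::finite \<Rightarrow> 'n \<Rightarrow> real^'n \<Rightarrow> real \<Rightarrow> real) \<Rightarrow> ('n \<Rightarrow> real^'n \<Rightarrow> real \<Rightarrow> real)
    \<Rightarrow> (real^'n \<Rightarrow> real \<Rightarrow> real) \<Rightarrow> real \<Rightarrow> (real^'n \<Rightarrow> real) \<Rightarrow> real^'n \<Rightarrow> real" where
  "Lop p q r t v x = - (\<Sum>i\<in>UNIV. \<Sum>j\<in>UNIV. p i j x t * pdx i (pdx j v) x)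
       + (\<Sum>i\<in>UNIV. q i x t * pdx i v x) + r x t * v x"

definition unif_elliptic :: "(real^'n) set \<Rightarrow> real \<Rightarrow> ('n::finite \<Rightarrow> 'n \<Rightarrow> real^'n \<Rightarrow> real \<Rightarrow> real) \<Rightarrow> bool" where
  "unif_elliptic \<Omega> T p \<longleftrightarrow> (\<exists>c>0. \<forall>x\<in>\<Omega>. \<forall>t\<in>{0<..T}. \<forall>\<xi>::real^'n.
      (\<Sum>i\<in>UNIV. \<Sum>j\<in>UNIV. p i j x t * \<xi>$i * \<xi>$j) \<ge> c * (norm \<xi>)\<^sup>2)"

definition classical_sol :: "(real^'n) set \<Rightarrow> real \<Rightarrow> real
    \<Rightarrow> ('n::finite \<Rightarrow> 'n \<Rightarrow> real^'n \<Rightarrow> real \<Rightarrow> real) \<Rightarrow> ('n \<Rightarrow> real^'n \<Rightarrow> real \<Rightarrow> real)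
    \<Rightarrow> (real^'n \<Rightarrow> real \<Rightarrow> real) \<Rightarrow> (real^'n \<Rightarrow> real \<Rightarrow> real) \<Rightarrow> (real^'n \<Rightarrow> real \<Rightarrow> real)
    \<Rightarrow> (real^'n \<Rightarrow> real) \<Rightarrow> (real^'n \<Rightarrow> real) \<Rightarrow> (real^'n \<Rightarrow> real \<Rightarrow> real) \<Rightarrow> bool" where
  "classical_sol \<Omega> T \<delta> p q r f \<psi> \<phi>0 \<phi>1 u \<longleftrightarrow>
     continuous_on (closure \<Omega> \<times> {0..T}) (\<lambda>(x,t). u x t) \<and>
     (\<forall>x\<in>\<Omega>. \<forall>t\<in>{0<..T}. caputo_exists \<delta> u x t \<and>
        (\<forall>i. pdx_exists i (\<lambda>y. u y t) x) \<and>
        (\<forall>i j. pdx_exists i (pdx j (\<lambda>y. u y t)) x)) \<and>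
     (\<forall>x\<in>\<Omega>. \<forall>t\<in>{0<..T}. caputo \<delta> u x t + Lop p q r t (\<lambda>y. u y t) x = f x t) \<and>
     (\<forall>x\<in>frontier \<Omega>. \<forall>t\<in>{0<..T}. u x t = \<psi> x t) \<and>
     (\<forall>x\<in>closure \<Omega>. u x 0 = \<phi>0 x) \<and>
     (dbar \<delta> = 2 \<longrightarrow> (\<forall>x\<in>\<Omega>. ((\<lambda>s. u x s) has_real_derivative \<phi>1 x) (at 0 within {0..T})))"

definition C2dbar :: "(real^'n::finite) set \<Rightarrow> real \<Rightarrow> real \<Rightarrow> (real^'n \<Rightarrow> real \<Rightarrow> real) \<Rightarrow> bool" where
  "C2dbar \<Omega> T \<delta> w \<longleftrightarrow>
     continuous_on (closure \<Omega> \<times> {0..T}) (\<lambda>(x,t). w x t) \<and>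
     (\<forall>i. \<exists>G. continuous_on (closure \<Omega> \<times> {0..T}) G \<and>
        (\<forall>x\<in>\<Omega>. \<forall>t\<in>{0<..T}. pdx_exists i (\<lambda>y. w y t) x \<and> pdx i (\<lambda>y. w y t) x = G (x,t))) \<and>
     (\<forall>i j. \<exists>G. continuous_on (closure \<Omega> \<times> {0..T}) G \<and>
        (\<forall>x\<in>\<Omega>. \<forall>t\<in>{0<..T}. pdx_exists i (pdx j (\<lambda>y. w y t)) x \<and>
            pdx i (pdx j (\<lambda>y. w y t)) x = G (x,t))) \<and>
     (\<forall>k\<in>{1, dbar \<delta>}. \<exists>G. continuous_on (closure \<Omega> \<times> {0..T}) G \<and>
        (\<forall>x\<in>\<Omega>. \<forall>t\<in>{0<..<T}. (deriv ^^ (k - 1)) (w x) differentiable (at t) \<and>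
            dtk k w x t = G (x,t)))"

definition bvp_sol :: "(real^'n) set \<Rightarrow> ('n::finite \<Rightarrow> 'n \<Rightarrow> real^'n \<Rightarrow> real \<Rightarrow> real)
    \<Rightarrow> ('n \<Rightarrow> real^'n \<Rightarrow> real \<Rightarrow> real) \<Rightarrow> (real^'n \<Rightarrow> real \<Rightarrow> real) \<Rightarrow> (real^'n \<Rightarrow> real \<Rightarrow> real)
    \<Rightarrow> (real^'n \<Rightarrow> real \<Rightarrow> real) \<Rightarrow> (real^'n \<Rightarrow> real) \<Rightarrow> bool" where
  "bvp_sol \<Omega> p q r f \<psi> w \<longleftrightarrow>
     continuous_on (closure \<Omega>) w \<and>
     (\<forall>x\<in>\<Omega>. (\<forall>i. pdx_exists i w x) \<and> (\<forall>i j. pdx_exists i (pdx j w) x)) \<and>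
     (\<forall>x\<in>\<Omega>. Lop p q r 0 w x = f x 0) \<and>
     (\<forall>x\<in>frontier \<Omega>. w x = \<psi> x 0)"

end

theory Submission
  imports Defs
begin

text \<open>For \<open>t \<rightarrow> 0\<^sup>+\<close> every term of the equation at time \<open>t\<close> converges: the coefficients,
  \<open>f\<close> and, by the \<open>C\<^sup>2\<^sup>,\<^sup>\<delta>\<close> regularity, the spatial derivatives of \<open>u(\<cdot>,t)\<close> (which are
  thereby identified with those of \<open>\<phi>\<^sub>0\<close>) converge to their values at \<open>t = 0\<close>, while the
  Caputo derivative is \<open>O(t\<^sup>\<alpha>)\<close> with \<open>\<alpha> = \<lceil>\<delta>\<rceil> - \<delta> > 0\<close> because \<open>\<partial>\<^sub>t\<^sup>\<lceil>\<delta>\<rceil>u\<close> is bounded.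
  Hence \<open>L\<^sub>0\<phi>\<^sub>0 = f(\<cdot>,0)\<close> in \<open>\<Omega>\<close>, and \<open>\<phi>\<^sub>0 = \<psi>(\<cdot>,0)\<close> on the boundary by compatibility.\<close>

lemma has_integral_powr_diff:
  fixes a t :: real
  assumes "a > -1" "t \<ge> 0"
  shows "((\<lambda>s. (t - s) powr a) has_integral t powr (a + 1) / (a + 1)) {0..t}"
proof -
  have "((\<lambda>x. (-x) powr a) has_integral t powr (a + 1) / (a + 1)) {-t..-0}"
    by (rule has_integral_reflect_lemma_real[OF has_integral_powr_from_0[OF assms]])
  then have "(((\<lambda>x. (-x) powr a) \<circ> (+) (-t)) has_integral t powr (a + 1) / (a + 1)) {0..t}"
    using has_integral_shift_Icc_real[of "\<lambda>x. (-x) powr a" "-t" _ 0 t] by simp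
  then show ?thesis by (simp add: o_def)
qed

lemma tendsto_at_right_0_of_continuous_on_Times:
  fixes g :: "'a::topological_space \<Rightarrow> real \<Rightarrow> 'b::topological_space"
  assumes "continuous_on (A \<times> {0..T}) (\<lambda>(x,t). g x t)" "x \<in> A" "T > 0"
  shows "((\<lambda>t. g x t) \<longlongrightarrow> g x 0) (at_right 0)"
proof -
  have "((\<lambda>t. (\<lambda>(x,t). g x t) (x,t)) \<longlongrightarrow> (\<lambda>(x,t). g x t) (x,0)) (at_right 0)"
  proof (rule continuous_on_tendsto_compose[OF assms(1)])
    show "((\<lambda>t. (x, t)) \<longlongrightarrow> (x, 0)) (at_right 0)"
      by (intro tendsto_intros)
    show "\<forall>\<^sub>F t in at_right 0. (x, t) \<in> A \<times> {0..T}"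
      unfolding eventually_at_right_field using assms by (intro exI[of _ T]) auto
  qed (use assms in auto)
  then show ?thesis by simp
qed

lemma has_real_derivative_of_tendsto_at_right_0:
  fixes g :: "real \<Rightarrow> real \<Rightarrow> real" and D :: "real \<Rightarrow> real \<Rightarrow> real"
  assumes "\<tau> > 0"
    and deriv: "\<And>t h. 0 < t \<Longrightarrow> t < \<tau> \<Longrightarrow> \<bar>h\<bar> < \<tau> \<Longrightarrow> (g t has_real_derivative D t h) (at h)"
    and lim: "\<And>h. \<bar>h\<bar> < \<tau> \<Longrightarrow> ((\<lambda>t. g t h) \<longlongrightarrow> g0 h) (at_right 0)"
    and D: "\<And>\<epsilon>. \<epsilon> > 0 \<Longrightarrow> \<exists>\<eta>>0. \<forall>t h. 0 < t \<longrightarrow> t < \<eta> \<longrightarrow> \<bar>h\<bar> < \<eta> \<longrightarrow> \<bar>D t h - c\<bar> \<le> \<epsilon>"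
  shows "(g0 has_real_derivative c) (at 0)"
  unfolding has_field_derivative_def has_derivative_at_alt
proof (intro conjI allI impI)
  show "bounded_linear ((*) c)"
    by (rule bounded_linear_mult_right)
  fix \<epsilon> :: real assume "\<epsilon> > 0"
  then obtain \<eta> where "\<eta> > 0" and \<eta>: "\<And>t h. 0 < t \<Longrightarrow> t < \<eta> \<Longrightarrow> \<bar>h\<bar> < \<eta> \<Longrightarrow> \<bar>D t h - c\<bar> \<le> \<epsilon>"
    using D by blast
  define d where "d = min \<tau> \<eta>"
  have "d > 0" using \<open>\<tau> > 0\<close> \<open>\<eta> > 0\<close> by (simp add: d_def)
  have "\<bar>g0 h - g0 0 - c * (h - 0)\<bar> \<le> \<epsilon> * \<bar>h - 0\<bar>" if "\<bar>h - 0\<bar> < d" for h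
  proof -
    let ?S = "{-\<bar>h\<bar>..\<bar>h\<bar>}"
    \<comment> \<open>mean value inequality for \<open>g t z - c z\<close>, uniformly in small \<open>t\<close>; it survives \<open>t \<rightarrow> 0\<^sup>+\<close>\<close>
    have bound: "\<bar>g t h - g t 0 - c * h\<bar> \<le> \<epsilon> * \<bar>h\<bar>" if t: "0 < t" "t < d" for t
    proof -
      have "norm ((g t h - c * h) - (g t 0 - c * 0)) \<le> \<epsilon> * norm (h - 0)"
      proof (rule field_differentiable_bound[of ?S "\<lambda>z. g t z - c * z" "\<lambda>z. D t z - c"])
        fix z assume z: "z \<in> ?S"
        then have "\<bar>z\<bar> < d" using \<open>\<bar>h - 0\<bar> < d\<close> by auto
        then have "(g t has_real_derivative D t z) (at z)"
          using t by (intro deriv) (auto simp: d_def)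
        then show "((\<lambda>z. g t z - c * z) has_field_derivative D t z - c) (at z within ?S)"
          using has_field_derivative_at_within[OF DERIV_diff[OF _ DERIV_cmult_Id]] by blast
        show "norm (D t z - c) \<le> \<epsilon>"
          using \<eta> t \<open>\<bar>z\<bar> < d\<close> by (simp add: d_def)
      qed auto
      then show ?thesis by (simp add: algebra_simps)
    qed
    have "((\<lambda>t. \<bar>g t h - g t 0 - c * h\<bar>) \<longlongrightarrow> \<bar>g0 h - g0 0 - c * h\<bar>) (at_right 0)"
      using lim[of h] lim[of 0] that \<open>d > 0\<close> by (intro tendsto_intros) (auto simp: d_def)
    moreover have "\<forall>\<^sub>F t in at_right 0. \<bar>g t h - g t 0 - c * h\<bar> \<le> \<epsilon> * \<bar>h\<bar>"
      unfolding eventually_at_right_field using \<open>d > 0\<close> bound by blast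
    ultimately show ?thesis
      by (simp add: tendsto_upperbound)
  qed
  then show "\<exists>d>0. \<forall>h. norm (h - 0) < d \<longrightarrow> norm (g0 h - g0 0 - c * (h - 0)) \<le> \<epsilon> * norm (h - 0)"
    using \<open>d > 0\<close> by auto
qed

lemma continuous_on_Times_near_initial_line:
  fixes G :: "'a::real_normed_vector \<times> real \<Rightarrow> real"
  assumes cG: "continuous_on (closure \<Omega> \<times> {0..T}) G" and "open \<Omega>" "y \<in> \<Omega>" "T > 0"
    and "norm v = 1" "\<epsilon> > 0"
  shows "\<exists>\<eta>>0. \<forall>t h. 0 < t \<longrightarrow> t < \<eta> \<longrightarrow> \<bar>h\<bar> < \<eta> \<longrightarrow> \<bar>G (y + h *\<^sub>R v, t) - G (y,0)\<bar> \<le> \<epsilon>"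
proof -
  obtain e where "e > 0" "ball y e \<subseteq> \<Omega>" using \<open>open \<Omega>\<close> \<open>y \<in> \<Omega>\<close> open_contains_ball by blast
  have "(y,0) \<in> closure \<Omega> \<times> {0..T}" using \<open>y \<in> \<Omega>\<close> \<open>T > 0\<close> closure_subset by auto
  then obtain \<eta> where "\<eta> > 0" and \<eta>: "\<And>p. p \<in> closure \<Omega> \<times> {0..T} \<Longrightarrow> dist p (y,0) < \<eta> \<Longrightarrow>
      dist (G p) (G (y,0)) < \<epsilon>"
    using cG \<open>\<epsilon> > 0\<close> unfolding continuous_on_iff by metis
  have "\<bar>G (y + h *\<^sub>R v, t) - G (y,0)\<bar> \<le> \<epsilon>"
    if "0 < t" "t < min (\<eta>/2) (min e T)" "\<bar>h\<bar> < min (\<eta>/2) (min e T)" for t h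
  proof -
    have "y + h *\<^sub>R v \<in> \<Omega>"
      using \<open>ball y e \<subseteq> \<Omega>\<close> that \<open>norm v = 1\<close> by (auto simp: dist_norm)
    then have "(y + h *\<^sub>R v, t) \<in> closure \<Omega> \<times> {0..T}"
      using that closure_subset by auto
    moreover have "dist (y + h *\<^sub>R v, t) (y, 0) \<le> \<bar>dist (y + h *\<^sub>R v) y\<bar> + \<bar>dist t 0\<bar>"
      unfolding dist_Pair_Pair by (rule sqrt_sum_squares_le_sum_abs)
    then have "dist (y + h *\<^sub>R v, t) (y, 0) < \<eta>"
      using that \<open>norm v = 1\<close> by (simp add: dist_norm)
    ultimately show ?thesis using \<eta> by (simp add: dist_real_def less_imp_le)
  qed
  then show ?thesis
    using \<open>\<eta> > 0\<close> \<open>e > 0\<close> \<open>T > 0\<close> by (intro exI[of _ "min (\<eta>/2) (min e T)"]) auto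
qed

lemma pdx_of_tendsto_at_right_0:
  fixes w :: "real \<Rightarrow> real^'n::finite \<Rightarrow> real" and w0 :: "real^'n \<Rightarrow> real"
    and G :: "(real^'n) \<times> real \<Rightarrow> real"
  assumes "open \<Omega>" and "T > 0"
    and cG: "continuous_on (closure \<Omega> \<times> {0..T}) G"
    and pdx_G: "\<forall>y\<in>\<Omega>. \<forall>t\<in>{0<..T}. pdx_exists i (w t) y \<and> pdx i (w t) y = G (y,t)"
    and lim: "\<forall>y\<in>\<Omega>. ((\<lambda>t. w t y) \<longlongrightarrow> w0 y) (at_right 0)"
    and y: "y \<in> \<Omega>"
  shows "pdx_exists i w0 y \<and> ((\<lambda>t. pdx i (w t) y) \<longlongrightarrow> pdx i w0 y) (at_right 0)"
proof -
  define e1 :: "real^'n" where "e1 = axis i 1"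
  have "norm e1 = 1" by (simp add: e1_def)
  obtain e where "e > 0" "ball y e \<subseteq> \<Omega>" using \<open>open \<Omega>\<close> y open_contains_ball by blast
  have line: "y + h *\<^sub>R e1 \<in> \<Omega>" if "\<bar>h\<bar> < e" for h
    using \<open>ball y e \<subseteq> \<Omega>\<close> that \<open>norm e1 = 1\<close> by (auto simp: dist_norm)
  have "((\<lambda>h. w0 (y + h *\<^sub>R e1)) has_real_derivative G (y,0)) (at 0)"
  proof (rule has_real_derivative_of_tendsto_at_right_0[where \<tau>="min e T"
        and g="\<lambda>t h. w t (y + h *\<^sub>R e1)" and D="\<lambda>t h. G (y + h *\<^sub>R e1, t)"])
    show "min e T > 0" using \<open>e > 0\<close> \<open>T > 0\<close> by simp
  next
    fix t h :: real assume t: "0 < t" "t < min e T" and h: "\<bar>h\<bar> < min e T"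
    let ?z = "y + h *\<^sub>R e1"
    have "pdx_exists i (w t) ?z" "pdx i (w t) ?z = G (?z,t)"
      using pdx_G line[of h] t h by auto
    then have "((\<lambda>k. w t (?z + k *\<^sub>R e1)) has_real_derivative G (?z,t)) (at 0)"
      unfolding pdx_exists_def pdx_def e1_def by (metis DERIV_deriv_iff_real_differentiable)
    then have "((\<lambda>k. w t (y + (k + h) *\<^sub>R e1)) has_real_derivative G (?z,t)) (at 0)"
      by (simp add: algebra_simps scaleR_add_left)
    then show "((\<lambda>h. w t (y + h *\<^sub>R e1)) has_real_derivative G (?z,t)) (at h)"
      using DERIV_shift[of "\<lambda>h. w t (y + h *\<^sub>R e1)" "G (?z,t)" 0 h] by simp
  next
    fix h :: real assume "\<bar>h\<bar> < min e T"
    then show "((\<lambda>t. w t (y + h *\<^sub>R e1)) \<longlongrightarrow> w0 (y + h *\<^sub>R e1)) (at_right 0)"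
      using lim line by simp
  next
    fix \<epsilon> :: real assume "\<epsilon> > 0"
    then show "\<exists>\<eta>>0. \<forall>t h. 0 < t \<longrightarrow> t < \<eta> \<longrightarrow> \<bar>h\<bar> < \<eta> \<longrightarrow> \<bar>G (y + h *\<^sub>R e1, t) - G (y,0)\<bar> \<le> \<epsilon>"
      using continuous_on_Times_near_initial_line[OF cG \<open>open \<Omega>\<close> y \<open>T > 0\<close> \<open>norm e1 = 1\<close>] by blast
  qed
  then have pdx_w0: "pdx_exists i w0 y \<and> pdx i w0 y = G (y,0)"
    unfolding pdx_exists_def pdx_def e1_def using DERIV_imp_deriv real_differentiable_def by blast
  have "((\<lambda>t. G (y,t)) \<longlongrightarrow> G (y,0)) (at_right 0)"
    using tendsto_at_right_0_of_continuous_on_Times[of "closure \<Omega>" T "\<lambda>x t. G (x,t)" y]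
      cG y closure_subset \<open>T > 0\<close> by auto
  moreover have "\<forall>\<^sub>F t in at_right 0. G (y,t) = pdx i (w t) y"
    unfolding eventually_at_right_field using \<open>T > 0\<close> pdx_G y by (intro exI[of _ T]) auto
  ultimately show ?thesis
    using pdx_w0 Lim_transform_eventually by fastforce
qed

lemma C2dbar_pdx_tendsto_initial:
  fixes u :: "real^'n::finite \<Rightarrow> real \<Rightarrow> real"
  assumes "open \<Omega>" "T > 0" and reg: "C2dbar \<Omega> T \<delta> u"
    and ini: "\<forall>x\<in>closure \<Omega>. u x 0 = \<phi>0 x" and x: "x \<in> \<Omega>"
  shows "pdx_exists i \<phi>0 x \<and> ((\<lambda>t. pdx i (\<lambda>y. u y t) x) \<longlongrightarrow> pdx i \<phi>0 x) (at_right 0)"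
    and "pdx_exists i (pdx j \<phi>0) x \<and>
      ((\<lambda>t. pdx i (pdx j (\<lambda>y. u y t)) x) \<longlongrightarrow> pdx i (pdx j \<phi>0) x) (at_right 0)"
proof -
  have lim: "((\<lambda>t. u y t) \<longlongrightarrow> \<phi>0 y) (at_right 0)" if "y \<in> \<Omega>" for y
    using tendsto_at_right_0_of_continuous_on_Times[of "closure \<Omega>" T u y] reg that ini
      closure_subset \<open>T > 0\<close> unfolding C2dbar_def by auto
  have first: "pdx_exists k \<phi>0 y \<and> ((\<lambda>t. pdx k (\<lambda>y. u y t) y) \<longlongrightarrow> pdx k \<phi>0 y) (at_right 0)"
    if "y \<in> \<Omega>" for k y
  proof -
    obtain G where "continuous_on (closure \<Omega> \<times> {0..T}) G"
      "\<forall>x\<in>\<Omega>. \<forall>t\<in>{0<..T}. pdx_exists k (\<lambda>y. u y t) x \<and> pdx k (\<lambda>y. u y t) x = G (x,t)"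
      using reg unfolding C2dbar_def by blast
    then show ?thesis
      using pdx_of_tendsto_at_right_0[where w="\<lambda>t y. u y t"] assms(1,2) lim that by blast
  qed
  then show "pdx_exists i \<phi>0 x \<and> ((\<lambda>t. pdx i (\<lambda>y. u y t) x) \<longlongrightarrow> pdx i \<phi>0 x) (at_right 0)"
    using x by blast
  obtain G where "continuous_on (closure \<Omega> \<times> {0..T}) G"
    "\<forall>x\<in>\<Omega>. \<forall>t\<in>{0<..T}. pdx_exists i (pdx j (\<lambda>y. u y t)) x \<and> pdx i (pdx j (\<lambda>y. u y t)) x = G (x,t)"
    using reg unfolding C2dbar_def by blast
  then show "pdx_exists i (pdx j \<phi>0) x \<and>
      ((\<lambda>t. pdx i (pdx j (\<lambda>y. u y t)) x) \<longlongrightarrow> pdx i (pdx j \<phi>0) x) (at_right 0)"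
    using pdx_of_tendsto_at_right_0[where w="\<lambda>t. pdx j (\<lambda>y. u y t)"] assms(1,2) first x by blast
qed

lemma Lop_tendsto_initial:
  fixes u :: "real^'n::finite \<Rightarrow> real \<Rightarrow> real"
  assumes "open \<Omega>" "T > 0" and reg: "C2dbar \<Omega> T \<delta> u"
    and ini: "\<forall>x\<in>closure \<Omega>. u x 0 = \<phi>0 x" and x: "x \<in> \<Omega>"
    and cp: "\<And>i j. continuous_on (closure \<Omega> \<times> {0..T}) (\<lambda>(x,t). p i j x t)"
    and cq: "\<And>i. continuous_on (closure \<Omega> \<times> {0..T}) (\<lambda>(x,t). q i x t)"
    and cr: "continuous_on (closure \<Omega> \<times> {0..T}) (\<lambda>(x,t). r x t)"
  shows "((\<lambda>t. Lop p q r t (\<lambda>y. u y t) x) \<longlongrightarrow> Lop p q r 0 \<phi>0 x) (at_right 0)"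
proof -
  have "x \<in> closure \<Omega>" using x closure_subset by blast
  note at_0 = tendsto_at_right_0_of_continuous_on_Times[OF _ this \<open>T > 0\<close>]
  have "((\<lambda>t. u x t) \<longlongrightarrow> \<phi>0 x) (at_right 0)"
    using at_0[of u] reg ini \<open>x \<in> closure \<Omega>\<close> unfolding C2dbar_def by auto
  then show ?thesis
    unfolding Lop_def
    using C2dbar_pdx_tendsto_initial[OF assms(1-5)] at_0[OF cp] at_0[OF cq] at_0[OF cr]
    by (intro tendsto_intros) auto
qed

lemma caputo_bound:
  fixes u :: "real^'n::finite \<Rightarrow> real \<Rightarrow> real" and \<delta> :: real
  defines "\<alpha> \<equiv> real (dbar \<delta>) - \<delta>"
  assumes delta: "(0 < \<delta> \<and> \<delta> < 1) \<or> (1 < \<delta> \<and> \<delta> < 2)" and t: "t > 0"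
    and ex: "caputo_exists \<delta> u x t"
    and M: "\<forall>s\<in>{0<..<t}. \<bar>dtk (dbar \<delta>) u x s\<bar> \<le> M"
  shows "\<bar>caputo \<delta> u x t\<bar> \<le> M / (Gamma \<alpha> * \<alpha>) * t powr \<alpha>"
proof -
  have \<alpha>: "0 < \<alpha>" "\<alpha> < 1" using delta by (auto simp: \<alpha>_def dbar_def)
  have "M \<ge> 0" using M[rule_format, of "t/2"] t by auto
  define F where "F s = (t - s) powr (\<alpha> - 1) * dtk (dbar \<delta>) u x s" for s
  define F' where "F' s = (if s \<in> {0<..<t} then F s else 0)" for s
  have "F integrable_on {0..t}" using ex unfolding caputo_exists_def F_def \<alpha>_def by auto
  then have F'_int: "F' integrable_on {0..t}"
    by (rule integrable_spike_finite[of "{0,t}", rotated 2]) (auto simp: F'_def)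
  have int_F: "integral {0..t} F = integral {0..t} F'"
    by (rule integral_spike[of "{0,t}"]) (auto simp: F'_def)
  have majorant: "((\<lambda>s. M * (t - s) powr (\<alpha> - 1)) has_integral M * (t powr \<alpha> / \<alpha>)) {0..t}"
    using has_integral_mult_right[OF has_integral_powr_diff[of "\<alpha> - 1" t]] \<alpha> t by simp
  have "norm (F' s) \<le> M * (t - s) powr (\<alpha> - 1)" if "s \<in> {0..t}" for s
  proof (cases "s \<in> {0<..<t}")
    case True
    then have "\<bar>dtk (dbar \<delta>) u x s\<bar> \<le> M" using M by blast
    then have "(t - s) powr (\<alpha> - 1) * \<bar>dtk (dbar \<delta>) u x s\<bar> \<le> (t - s) powr (\<alpha> - 1) * M"
      by (rule mult_left_mono) simp
    then show ?thesis using True by (simp add: F'_def F_def abs_mult mult.commute)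
  qed (use \<open>M \<ge> 0\<close> in \<open>auto simp: F'_def\<close>)
  then have "norm (integral {0..t} F') \<le> integral {0..t} (\<lambda>s. M * (t - s) powr (\<alpha> - 1))"
    using majorant by (intro integral_norm_bound_integral[OF F'_int]) auto
  then have I: "\<bar>integral {0..t} F'\<bar> \<le> M * (t powr \<alpha> / \<alpha>)"
    using integral_unique[OF majorant] by simp
  have "Gamma \<alpha> > 0" using \<alpha> Gamma_real_pos by blast
  have "caputo \<delta> u x t = integral {0..t} F' / Gamma \<alpha>"
    unfolding caputo_def int_F[symmetric] F_def \<alpha>_def by simp
  then have "\<bar>caputo \<delta> u x t\<bar> = \<bar>integral {0..t} F'\<bar> / Gamma \<alpha>"
    using \<open>Gamma \<alpha> > 0\<close> by simp
  also have "\<dots> \<le> M * (t powr \<alpha> / \<alpha>) / Gamma \<alpha>"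
    using divide_right_mono[OF I] \<open>Gamma \<alpha> > 0\<close> by simp
  also have "\<dots> = M / (Gamma \<alpha> * \<alpha>) * t powr \<alpha>"
    by simp
  finally show ?thesis .
qed

lemma caputo_tendsto_0:
  fixes u :: "real^'n::finite \<Rightarrow> real \<Rightarrow> real"
  assumes delta: "(0 < \<delta> \<and> \<delta> < 1) \<or> (1 < \<delta> \<and> \<delta> < 2)" and "T > 0"
    and ex: "\<forall>t\<in>{0<..<T}. caputo_exists \<delta> u x t"
    and M: "\<forall>s\<in>{0<..<T}. \<bar>dtk (dbar \<delta>) u x s\<bar> \<le> M"
  shows "((\<lambda>t. caputo \<delta> u x t) \<longlongrightarrow> 0) (at_right 0)"
proof (rule Lim_null_comparison)
  define \<alpha> where "\<alpha> = real (dbar \<delta>) - \<delta>"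
  have "\<alpha> > 0" using delta by (auto simp: \<alpha>_def dbar_def)
  show "\<forall>\<^sub>F t in at_right 0. norm (caputo \<delta> u x t) \<le> M / (Gamma \<alpha> * \<alpha>) * t powr \<alpha>"
    unfolding eventually_at_right_field real_norm_def \<alpha>_def
    using \<open>T > 0\<close> ex M by (intro exI[of _ T] conjI allI impI caputo_bound[OF delta]) auto
  have "((\<lambda>t. t powr \<alpha>) \<longlongrightarrow> 0) (at_right 0)"
    using \<open>\<alpha> > 0\<close> by (intro tendsto_zero_powrI tendsto_ident_at) (auto simp: eventually_at_right_field)
  then show "((\<lambda>t. M / (Gamma \<alpha> * \<alpha>) * t powr \<alpha>) \<longlongrightarrow> 0) (at_right 0)"
    by (rule tendsto_mult_right_zero)
qed

lemma C2dbar_caputo_tendsto_0: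
  fixes u :: "real^'n::finite \<Rightarrow> real \<Rightarrow> real"
  assumes delta: "(0 < \<delta> \<and> \<delta> < 1) \<or> (1 < \<delta> \<and> \<delta> < 2)" and "T > 0" and "bounded \<Omega>"
    and reg: "C2dbar \<Omega> T \<delta> u" and x: "x \<in> \<Omega>"
    and ex: "\<forall>t\<in>{0<..<T}. caputo_exists \<delta> u x t"
  shows "((\<lambda>t. caputo \<delta> u x t) \<longlongrightarrow> 0) (at_right 0)"
proof -
  have "\<exists>G. continuous_on (closure \<Omega> \<times> {0..T}) G \<and>
      (\<forall>x\<in>\<Omega>. \<forall>t\<in>{0<..<T}. (deriv ^^ (dbar \<delta> - 1)) (u x) differentiable (at t) \<and>
        dtk (dbar \<delta>) u x t = G (x,t))"
    using reg unfolding C2dbar_def by blast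
  then obtain G where cG: "continuous_on (closure \<Omega> \<times> {0..T}) G"
    and dtk_G: "\<forall>x\<in>\<Omega>. \<forall>t\<in>{0<..<T}. dtk (dbar \<delta>) u x t = G (x,t)"
    by blast
  have "compact (closure \<Omega> \<times> {0..T})"
    using \<open>bounded \<Omega>\<close> by (intro compact_Times) (auto simp: compact_closure)
  then have "bounded (G ` (closure \<Omega> \<times> {0..T}))"
    using cG compact_continuous_image compact_imp_bounded by blast
  then obtain M where M: "\<forall>z\<in>closure \<Omega> \<times> {0..T}. \<bar>G z\<bar> \<le> M"
    unfolding bounded_iff by auto
  have "\<forall>s\<in>{0<..<T}. \<bar>dtk (dbar \<delta>) u x s\<bar> \<le> M"
  proof
    fix s :: real assume "s \<in> {0<..<T}"
    then have "(x,s) \<in> closure \<Omega> \<times> {0..T}" using x closure_subset by auto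
    then show "\<bar>dtk (dbar \<delta>) u x s\<bar> \<le> M" using M dtk_G x \<open>s \<in> {0<..<T}\<close> by simp
  qed
  then show ?thesis using caputo_tendsto_0[OF delta \<open>T > 0\<close> ex] by blast
qed

theorem corollary2p7:
  fixes \<Omega> :: "(real^'n) set" and T \<delta> :: real
    and p :: "'n \<Rightarrow> 'n \<Rightarrow> real^'n \<Rightarrow> real \<Rightarrow> real" and q :: "'n \<Rightarrow> real^'n \<Rightarrow> real \<Rightarrow> real"
    and r f \<psi> u :: "real^'n \<Rightarrow> real \<Rightarrow> real" and \<phi>0 \<phi>1 :: "real^'n \<Rightarrow> real"
  assumes dom: "open \<Omega>" "connected \<Omega>" "bounded \<Omega>" "\<Omega> \<noteq> {}"
    and T: "T > 0"
    and delta: "(0 < \<delta> \<and> \<delta> < 1) \<or> (1 < \<delta> \<and> \<delta> < 2)"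
    and ell: "unif_elliptic \<Omega> T p"
    and cp: "\<And>i j. continuous_on (closure \<Omega> \<times> {0..T}) (\<lambda>(x,t). p i j x t)"
    and cq: "\<And>i. continuous_on (closure \<Omega> \<times> {0..T}) (\<lambda>(x,t). q i x t)"
    and cr: "continuous_on (closure \<Omega> \<times> {0..T}) (\<lambda>(x,t). r x t)"
    and cf: "continuous_on (closure \<Omega> \<times> {0..T}) (\<lambda>(x,t). f x t)"
    and c\<psi>: "continuous_on (frontier \<Omega> \<times> {0..T}) (\<lambda>(x,t). \<psi> x t)"
    and c\<phi>0: "continuous_on (closure \<Omega>) \<phi>0"
    and c\<phi>1: "continuous_on (closure \<Omega>) \<phi>1"
    and compat: "\<forall>x\<in>frontier \<Omega>. \<phi>0 x = \<psi> x 0"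
    and sol: "classical_sol \<Omega> T \<delta> p q r f \<psi> \<phi>0 \<phi>1 u"
    and reg: "C2dbar \<Omega> T \<delta> u"
    and uniq: "\<forall>w1 w2. bvp_sol \<Omega> p q r f \<psi> w1 \<and> bvp_sol \<Omega> p q r f \<psi> w2
                 \<longrightarrow> (\<forall>x\<in>closure \<Omega>. w1 x = w2 x)"
  shows "bvp_sol \<Omega> p q r f \<psi> \<phi>0 \<and>
         (\<forall>w. bvp_sol \<Omega> p q r f \<psi> w \<longrightarrow> (\<forall>x\<in>closure \<Omega>. w x = \<phi>0 x))"
proof -
  have ex: "\<forall>x\<in>\<Omega>. \<forall>t\<in>{0<..T}. caputo_exists \<delta> u x t"
    and eq: "\<forall>x\<in>\<Omega>. \<forall>t\<in>{0<..T}. caputo \<delta> u x t + Lop p q r t (\<lambda>y. u y t) x = f x t"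
    and ini: "\<forall>x\<in>closure \<Omega>. u x 0 = \<phi>0 x"
    using sol unfolding classical_sol_def by auto
  have L0: "Lop p q r 0 \<phi>0 x = f x 0" if x: "x \<in> \<Omega>" for x
  proof -
    have "((\<lambda>t. caputo \<delta> u x t + Lop p q r t (\<lambda>y. u y t) x) \<longlongrightarrow> 0 + Lop p q r 0 \<phi>0 x) (at_right 0)"
      using C2dbar_caputo_tendsto_0[OF delta T dom(3) reg x] Lop_tendsto_initial[OF dom(1) T reg ini x cp cq cr]
        ex x by (intro tendsto_add) auto
    moreover have "\<forall>\<^sub>F t in at_right 0. caputo \<delta> u x t + Lop p q r t (\<lambda>y. u y t) x = f x t"
      unfolding eventually_at_right_field using T eq x by (intro exI[of _ T]) auto
    ultimately have "((\<lambda>t. f x t) \<longlongrightarrow> 0 + Lop p q r 0 \<phi>0 x) (at_right 0)"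
      by (rule Lim_transform_eventually)
    moreover have "((\<lambda>t. f x t) \<longlongrightarrow> f x 0) (at_right 0)"
      using tendsto_at_right_0_of_continuous_on_Times[OF cf _ T] x closure_subset by blast
    ultimately show ?thesis
      using tendsto_unique[OF trivial_limit_at_right_real] by force
  qed
  have "pdx_exists i \<phi>0 x" "pdx_exists i (pdx j \<phi>0) x" if "x \<in> \<Omega>" for i j x
    using C2dbar_pdx_tendsto_initial[OF dom(1) T reg ini that] by auto
  then have "bvp_sol \<Omega> p q r f \<psi> \<phi>0"
    unfolding bvp_sol_def using c\<phi>0 L0 compat by simp
  then show ?thesis using uniq by blast
qed

end
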